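(* Let $s,t$ be processes, $\mathcal{Z}_s\in\mathrm{res}(s)$ with initial state $z_s$ and $\mathcal{Z}_t\in\mathrm{res}(t)$ with initial state $z_t$. Then $\Psi_{\mathcal{Z}_s}\equiv^\dagger\Psi_{\mathcal{Z}_t}$ if and only if $\Pr(\mathcal{C}^{\mathrm{w}}(z_s,\alpha))=\Pr(\mathcal{C}^{\mathrm{w}}(z_t,\alpha))$ for all $\alpha\in A^\star$.
   Context: PTS $(\mathcal{S},A_\tau,\to)$ with $A_\tau=A\cup\{\tau\}$, $\tau$ the silent action, finitely supported distributions; processes image-finite and finite. Computations $c=s_0\xrightarrow{a_1}\cdots\xrightarrow{a_n}s_n$ via transitions $s_{i-1}\xrightarrow{a_i}\pi_i$, $s_i\in\mathrm{supp}(\pi_i)$; $\Pr(c)=\prod\pi_i(s_i)$ (empty: 1); $\mathrm{tr}(c)=a_1\cdots a_n\in A_\tau^\star$; maximal = not a proper prefix of another computation from the same process; $\mathcal{C}_{\max}(z,\alpha)=\{c\in\mathcal{C}_{\max}(z):\mathrm{tr}(c)=\alpha\}$; $\Pr$ of a set is the sum. A resolution of $s$ is a PTS $\mathcal{Z}=(Z,A_\tau,\to_{\mathcal{Z}})$ with $\mathrm{corr}\colon Z\to\mathcal{S}$ and initial state $z_s$, $\mathrm{corr}(z_s)=s$, such that $z_s$ is in no target support, every other state is in the support of a target of a transition from a different state, every $z\xrightarrow{a}_{\mathcal{Z}}\pi$ is matched by $\mathrm{corr}(z)\xrightarrow{a}\pi'$ with $\pi(z')=\pi'(\mathrm{corr}(z'))$,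 and each state has at most one outgoing transition. Traces are equivalent, $\alpha\equiv\beta$, iff they coincide after deleting all $\tau$'s. For $\alpha\in A^\star$, $\mathcal{C}^{\mathrm{w}}(z,\alpha)$ is the set of computations $c$ from $z$ with $\mathrm{tr}(c)\equiv\alpha$ that are not proper prefixes of another computation $c'$ from $z$ with $\mathrm{tr}(c')\equiv\alpha$. Trace formulae $\Phi::=\top\mid\langle a\rangle\Phi$, $a\in A_\tau$; tracing formula $\Phi_\varepsilon=\top$, $\Phi_{a\alpha}=\langle a\rangle\Phi_\alpha$; $\Phi_\alpha\equiv\Phi_\beta$ iff $\alpha\equiv\beta$. Trace distribution formulae $\bigoplus_{i\in I}r_i\Phi_i$ ($I$ finite nonempty, $\Phi_i$ pairwise distinct, $r_i\in(0,1]$, $\sum r_i=1$) are viewed as distributions on trace formulae; $\Psi_1\equiv^\dagger\Psi_2$ iff they assign the same total probability to every $\equiv$-class. Mimicking formula: $\Psi_{\mathcal{Z}}=\bigoplus_{\alpha\in\mathrm{tr}(\mathcal{C}_{\max}(z))}\Pr(\mathcal{C}_{\max}(z,\alpha))\Phi_\alpha$. *)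

theory Defs
  imports "HOL-Probability.Probability_Mass_Function" "HOL-Library.Sublist"
begin

datatype 'a act = Tau | Act 'a

type_synonym ('s, 'a) pts = "('s \<times> 'a act \<times> 's pmf) set"

definition fin_supported :: "('s, 'a) pts \<Rightarrow> bool" where
  "fin_supported T \<longleftrightarrow> (\<forall>(s, a, \<pi>) \<in> T. finite (set_pmf \<pi>))"

definition image_finite :: "('s, 'a) pts \<Rightarrow> bool" where
  "image_finite T \<longleftrightarrow> (\<forall>s. finite {(a, \<pi>). (s, a, \<pi>) \<in> T})"

fun is_comp :: "('s, 'a) pts \<Rightarrow> 's \<Rightarrow> ('a act \<times> 's pmf \<times> 's) list \<Rightarrow> bool" where
  "is_comp T s [] = True"
| "is_comp T s ((a, \<pi>, s') # c) \<longleftrightarrow> (s, a, \<pi>) \<in> T \<and> s' \<in> set_pmf \<pi> \<and> is_comp T s' c"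

definition comps :: "('s, 'a) pts \<Rightarrow> 's \<Rightarrow> ('a act \<times> 's pmf \<times> 's) list set" where
  "comps T s = {c. is_comp T s c}"

definition Pr :: "('a act \<times> 's pmf \<times> 's) list \<Rightarrow> real" where
  "Pr c = prod_list (map (\<lambda>(a, \<pi>, s'). pmf \<pi> s') c)"

definition PrS :: "('a act \<times> 's pmf \<times> 's) list set \<Rightarrow> real" where
  "PrS C = (\<Sum>c\<in>C. Pr c)"

definition tr :: "('a act \<times> 's pmf \<times> 's) list \<Rightarrow> 'a act list" where
  "tr c = map fst c"

definition Cmax :: "('s, 'a) pts \<Rightarrow> 's \<Rightarrow> ('a act \<times> 's pmf \<times> 's) list set" where
  "Cmax T s = {c \<in> comps T s. \<not> (\<exists>c' \<in> comps T s. strict_prefix c c')}"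

definition Cmax_tr :: "('s, 'a) pts \<Rightarrow> 's \<Rightarrow> 'a act list \<Rightarrow> ('a act \<times> 's pmf \<times> 's) list set" where
  "Cmax_tr T s \<alpha> = {c \<in> Cmax T s. tr c = \<alpha>}"

definition finite_process :: "('s, 'a) pts \<Rightarrow> 's \<Rightarrow> bool" where
  "finite_process T s \<longleftrightarrow> finite (comps T s)"

definition is_resolution ::
  "('s, 'a) pts \<Rightarrow> 's \<Rightarrow> 'z set \<Rightarrow> ('z, 'a) pts \<Rightarrow> ('z \<Rightarrow> 's) \<Rightarrow> 'z \<Rightarrow> bool" where
  "is_resolution T s ZS TZ corr z0 \<longleftrightarrow>
     z0 \<in> ZS \<and>
     (\<forall>(z, a, \<pi>) \<in> TZ. z \<in> ZS \<and> set_pmf \<pi> \<subseteq> ZS) \<and>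
     corr z0 = s \<and>
     (\<forall>(z, a, \<pi>) \<in> TZ. z0 \<notin> set_pmf \<pi>) \<and>
     (\<forall>z \<in> ZS - {z0}. \<exists>z' a \<pi>. (z', a, \<pi>) \<in> TZ \<and> z' \<noteq> z \<and> z \<in> set_pmf \<pi>) \<and>
     (\<forall>(z, a, \<pi>) \<in> TZ. \<exists>\<pi>'. (corr z, a, \<pi>') \<in> T \<and>
          (\<forall>z' \<in> set_pmf \<pi>. pmf \<pi> z' = pmf \<pi>' (corr z'))) \<and>
     (\<forall>z a1 \<pi>1 a2 \<pi>2. (z, a1, \<pi>1) \<in> TZ \<longrightarrow> (z, a2, \<pi>2) \<in> TZ \<longrightarrow> a1 = a2 \<and> \<pi>1 = \<pi>2)"

definition del_tau :: "'a act list \<Rightarrow> 'a list" where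
  "del_tau \<alpha> = List.map_filter (\<lambda>x. case x of Tau \<Rightarrow> None | Act a \<Rightarrow> Some a) \<alpha>"

definition trace_equiv :: "'a act list \<Rightarrow> 'a act list \<Rightarrow> bool" where
  "trace_equiv \<alpha> \<beta> \<longleftrightarrow> del_tau \<alpha> = del_tau \<beta>"

definition Cw :: "('s, 'a) pts \<Rightarrow> 's \<Rightarrow> 'a list \<Rightarrow> ('a act \<times> 's pmf \<times> 's) list set" where
  "Cw T z \<alpha> = {c \<in> comps T z. trace_equiv (tr c) (map Act \<alpha>) \<and>
      \<not> (\<exists>c' \<in> comps T z. trace_equiv (tr c') (map Act \<alpha>) \<and> strict_prefix c c')}"

datatype 'a tformula = Top | Diam "'a act" "'a tformula"

fun tracing_formula :: "'a act list \<Rightarrow> 'a tformula" where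
  "tracing_formula [] = Top"
| "tracing_formula (a # \<alpha>) = Diam a (tracing_formula \<alpha>)"

fun ftrace :: "'a tformula \<Rightarrow> 'a act list" where
  "ftrace Top = []"
| "ftrace (Diam a \<Phi>) = a # ftrace \<Phi>"

definition formula_equiv :: "'a tformula \<Rightarrow> 'a tformula \<Rightarrow> bool" where
  "formula_equiv \<Phi> \<Psi> \<longleftrightarrow> trace_equiv (ftrace \<Phi>) (ftrace \<Psi>)"

text \<open>A trace distribution formula (+)_{i in I} r_i Phi_i is represented as the
  distribution on trace formulae it denotes, i.e. a weight function whose
  support is the finite index set of formulae.\<close>
type_synonym 'a tdformula = "'a tformula \<Rightarrow> real"

definition tdf_equiv :: "'a tdformula \<Rightarrow> 'a tdformula \<Rightarrow> bool" where
  "tdf_equiv \<Psi>1 \<Psi>2 \<longleftrightarrow>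
     (\<forall>\<Phi>. (\<Sum>\<Phi>' \<in> {\<Phi>'. \<Psi>1 \<Phi>' \<noteq> 0 \<and> formula_equiv \<Phi>' \<Phi>}. \<Psi>1 \<Phi>') =
          (\<Sum>\<Phi>' \<in> {\<Phi>'. \<Psi>2 \<Phi>' \<noteq> 0 \<and> formula_equiv \<Phi>' \<Phi>}. \<Psi>2 \<Phi>'))"

text \<open>Mimicking formula of a resolution with initial state z:
  (+)_{alpha in tr(Cmax(z))} Pr(Cmax(z, alpha)) Phi_alpha.\<close>
definition mimicking :: "('z, 'a) pts \<Rightarrow> 'z \<Rightarrow> 'a tdformula" where
  "mimicking TZ z = (\<lambda>\<Phi>. if \<exists>\<alpha> \<in> tr ` Cmax TZ z. \<Phi> = tracing_formula \<alpha>
      then PrS (Cmax_tr TZ z (ftrace \<Phi>)) else 0)"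

end

theory Submission
  imports Defs
begin

text \<open>
  Resolutions are deterministic, so their computations branch only probabilistically. Let F(\<delta>)
  be the probability of the maximal computations with weak trace \<delta>. Each computation in
  C^w(z,\<alpha>) is continued, with total probability 1, by maximal computations, whose weak traces
  extend \<alpha>; and every maximal computation whose weak trace extends \<alpha> passes through exactly
  one element of C^w(z,\<alpha>). Hence Pr(C^w(z,\<alpha>)) is the sum of F(\<delta>) over the extensions \<delta>
  of \<alpha>. The mimicking formulae are \<equiv>\<dagger>-equivalent iff the two resolutions have the same F, and
  a finitely supported F is determined by these sums: at a longest \<delta> where two candidates
  differ, they agree on all proper extensions of \<delta>.
\<close>

lemma finite_pmf_level_set: "finite {x \<in> set_pmf p. pmf p x = r}"
proof (rule ccontr)
  let ?S = "{x \<in> set_pmf p. pmf p x = r}"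
  assume inf: "infinite ?S"
  then have "r > 0"
    by (metis (mono_tags, lifting) infinite_imp_nonempty mem_Collect_eq pmf_positive ex_in_conv)
  obtain n :: nat where n: "1 / r < real n"
    using reals_Archimedean2 by blast
  obtain B where B: "finite B" "card B = n" "B \<subseteq> ?S"
    using infinite_arbitrarily_large[OF inf] by blast
  have "real n * r = sum (pmf p) B"
    using B by (simp add: subset_iff)
  also have "\<dots> \<le> 1"
    using measure_measure_pmf_finite[OF B(1), of p] measure_pmf.prob_le_1 by metis
  finally show False
    using n \<open>r > 0\<close> by (simp add: field_simps)
qed

lemma eq_if_prefix_sums_eq:
  fixes f g :: "'a list \<Rightarrow> 'b :: ab_group_add"
  assumes D: "finite D" and support: "\<And>\<delta>. \<delta> \<notin> D \<Longrightarrow> f \<delta> = 0 \<and> g \<delta> = 0"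
    and sums: "\<And>\<beta>. (\<Sum>\<delta> \<in> {\<delta> \<in> D. prefix \<beta> \<delta>}. f \<delta>) = (\<Sum>\<delta> \<in> {\<delta> \<in> D. prefix \<beta> \<delta>}. g \<delta>)"
  shows "f \<beta> = g \<beta>"
proof (rule ccontr)
  assume "f \<beta> \<noteq> g \<beta>"
  define X where "X = {\<delta> \<in> D. f \<delta> \<noteq> g \<delta>}"
  have "\<beta> \<in> X"
    using \<open>f \<beta> \<noteq> g \<beta>\<close> support[of \<beta>] unfolding X_def by (cases "\<beta> \<in> D") auto
  moreover have "finite X"
    using D by (simp add: X_def)
  ultimately have "Max (length ` X) \<in> length ` X"
    by (intro Max_in) auto
  then obtain \<delta>0 where "\<delta>0 \<in> X" and "length \<delta>0 = Max (length ` X)"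
    by (rule imageE) simp
  with \<open>finite X\<close> have longest: "length \<delta> \<le> length \<delta>0" if "\<delta> \<in> X" for \<delta>
    using that by simp
  \<comment> \<open>f and g agree on all strict extensions of a longest disagreement, so they agree on it\<close>
  have "(\<Sum>\<delta> \<in> {\<delta> \<in> D. strict_prefix \<delta>0 \<delta>}. f \<delta>) = (\<Sum>\<delta> \<in> {\<delta> \<in> D. strict_prefix \<delta>0 \<delta>}. g \<delta>)"
  proof (rule sum.cong[OF refl])
    fix \<delta> assume "\<delta> \<in> {\<delta> \<in> D. strict_prefix \<delta>0 \<delta>}"
    then have "\<delta> \<in> D" "length \<delta>0 < length \<delta>"
      by (auto simp: prefix_length_less)
    then show "f \<delta> = g \<delta>"
      using longest[of \<delta>] by (auto simp: X_def)
  qed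
  moreover have "{\<delta> \<in> D. prefix \<delta>0 \<delta>} = insert \<delta>0 {\<delta> \<in> D. strict_prefix \<delta>0 \<delta>}"
    using \<open>\<delta>0 \<in> X\<close> by (auto simp: X_def strict_prefix_def)
  ultimately have "f \<delta>0 = g \<delta>0"
    using sums[of \<delta>0] D by simp
  then show False
    using \<open>\<delta>0 \<in> X\<close> by (simp add: X_def)
qed

lemma comps_Nil [simp]: "[] \<in> comps T s"
  by (simp add: comps_def)

lemma comps_not_empty [simp]: "comps T s \<noteq> {}"
  using comps_Nil by (metis empty_iff)

lemma Cons_in_comps [simp]:
  "(a, \<pi>, s') # c \<in> comps T s \<longleftrightarrow> (s, a, \<pi>) \<in> T \<and> s' \<in> set_pmf \<pi> \<and> c \<in> comps T s'"
  by (simp add: comps_def)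

lemma tr_simps [simp]: "tr [] = []" "tr (x # c) = fst x # tr c"
  by (simp_all add: tr_def)

lemma Pr_simps [simp]: "Pr [] = 1" "Pr ((a, \<pi>, s') # c) = pmf \<pi> s' * Pr c"
  by (simp_all add: Pr_def)

lemma comps_eq:
  "comps T s = insert [] {(a, \<pi>, s') # c |a \<pi> s' c. (s, a, \<pi>) \<in> T \<and> s' \<in> set_pmf \<pi> \<and> c \<in> comps T s'}"
  (is "_ = ?rhs")
proof (rule set_eqI)
  fix c show "c \<in> comps T s \<longleftrightarrow> c \<in> ?rhs"
    by (cases c) auto
qed

lemma
  assumes "finite (comps T s)" "(s, a, \<pi>) \<in> T"
  shows finite_set_pmf_succ: "finite (set_pmf \<pi>)"
    and finite_comps_succ: "s' \<in> set_pmf \<pi> \<Longrightarrow> finite (comps T s')"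
proof -
  have "(\<lambda>s'. [(a, \<pi>, s')]) ` set_pmf \<pi> \<subseteq> comps T s"
    using assms(2) by auto
  then show "finite (set_pmf \<pi>)"
    by (rule finite_imageD[OF finite_subset]) (use assms(1) in \<open>auto intro: inj_onI\<close>)
next
  assume "s' \<in> set_pmf \<pi>"
  then have "(\<lambda>c. (a, \<pi>, s') # c) ` comps T s' \<subseteq> comps T s"
    using assms(2) by auto
  then show "finite (comps T s')"
    by (rule finite_imageD[OF finite_subset]) (use assms(1) in \<open>auto intro: inj_onI\<close>)
qed

lemma finite_comps_induct [consumes 1, case_names step]:
  assumes "finite (comps T s)"
    and "\<And>s. finite (comps T s) \<Longrightarrow>
           (\<And>a \<pi> s'. (s, a, \<pi>) \<in> T \<Longrightarrow> s' \<in> set_pmf \<pi> \<Longrightarrow> P s') \<Longrightarrow> P s"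
  shows "P s"
  using assms(1)
proof (induction "card (comps T s)" arbitrary: s rule: less_induct)
  case less
  show ?case
  proof (rule assms(2)[OF less.prems])
    fix a \<pi> s' assume succ: "(s, a, \<pi>) \<in> T" "s' \<in> set_pmf \<pi>"
    have fin': "finite (comps T s')"
      using finite_comps_succ[OF less.prems succ] .
    have "(\<lambda>c. (a, \<pi>, s') # c) ` comps T s' \<subset> comps T s"
      using succ by auto
    then have "card ((\<lambda>c. (a, \<pi>, s') # c) ` comps T s') < card (comps T s)"
      by (rule psubset_card_mono[OF less.prems])
    then have "card (comps T s') < card (comps T s)"
      by (simp add: card_image inj_on_def)
    then show "P s'"
      using less.hyps fin' by blast
  qed
qed

definition deterministic :: "('s, 'a) pts \<Rightarrow> bool" where
  "deterministic T \<longleftrightarrow> (\<forall>s a1 \<pi>1 a2 \<pi>2. (s, a1, \<pi>1) \<in> T \<longrightarrow> (s, a2, \<pi>2) \<in> T \<longrightarrow> a1 = a2 \<and> \<pi>1 = \<pi>2)"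

definition matches :: "('s, 'a) pts \<Rightarrow> ('z, 'a) pts \<Rightarrow> ('z \<Rightarrow> 's) \<Rightarrow> bool" where
  "matches T TZ corr \<longleftrightarrow> (\<forall>(z, a, \<pi>) \<in> TZ. \<exists>\<pi>'. (corr z, a, \<pi>') \<in> T \<and>
     (\<forall>z' \<in> set_pmf \<pi>. pmf \<pi> z' = pmf \<pi>' (corr z')))"

lemma resolution_deterministic_matches:
  assumes "is_resolution T s ZS TZ corr z0"
  shows "deterministic TZ" "matches T TZ corr" "corr z0 = s"
  using assms unfolding is_resolution_def deterministic_def matches_def by blast+

lemma comps_terminal:
  assumes "\<And>a \<pi>. (s, a, \<pi>) \<notin> T"
  shows "comps T s = {[]}"
  using assms by (subst comps_eq) auto

lemma comps_deterministic:
  assumes "deterministic T" "(s, a, \<pi>) \<in> T"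
  shows "comps T s = insert [] (\<Union>s' \<in> set_pmf \<pi>. (\<lambda>c. (a, \<pi>, s') # c) ` comps T s')"
  using assms unfolding deterministic_def by (subst comps_eq) blast

lemma finite_comps_if_matches:
  assumes det: "deterministic TZ" and match: "matches T TZ corr"
    and fin: "finite (comps T (corr z))"
  shows "finite (comps TZ z)"
proof -
  have "\<forall>z. corr z = s \<longrightarrow> finite (comps TZ z)" if "finite (comps T s)" for s
    using that
  proof (induction s rule: finite_comps_induct)
    case (step s)
    show ?case
    proof (intro allI impI)
      fix z assume z: "corr z = s"
      show "finite (comps TZ z)"
      proof (cases "\<exists>a \<pi>. (z, a, \<pi>) \<in> TZ")
        case False
        then show ?thesis by (simp add: comps_terminal)
      next
        case True
        then obtain a \<pi> where tz: "(z, a, \<pi>) \<in> TZ" by blast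
        then obtain \<pi>' where t: "(s, a, \<pi>') \<in> T"
          and pmf_eq: "\<And>z'. z' \<in> set_pmf \<pi> \<Longrightarrow> pmf \<pi> z' = pmf \<pi>' (corr z')"
          using match z unfolding matches_def by fast
        have succ: "corr z' \<in> set_pmf \<pi>'" if "z' \<in> set_pmf \<pi>" for z'
          using pmf_eq[OF that] that by (simp add: set_pmf_iff)
        \<comment> \<open>the successors of z with the same image all carry the same positive probability\<close>
        have "set_pmf \<pi> \<subseteq> (\<Union>x \<in> set_pmf \<pi>'. {z' \<in> set_pmf \<pi>. pmf \<pi> z' = pmf \<pi>' x})"
          using succ pmf_eq by auto
        moreover have "finite (\<Union>x \<in> set_pmf \<pi>'. {z' \<in> set_pmf \<pi>. pmf \<pi> z' = pmf \<pi>' x})"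
          using finite_set_pmf_succ[OF step(1) t] finite_pmf_level_set by blast
        ultimately have "finite (set_pmf \<pi>)"
          by (rule finite_subset)
        moreover have "finite (comps TZ z')" if "z' \<in> set_pmf \<pi>" for z'
          using step(2)[OF t succ[OF that]] by blast
        ultimately show ?thesis
          by (simp add: comps_deterministic[OF det tz])
      qed
    qed
  qed
  then show ?thesis
    using fin by blast
qed

lemma del_tau_simps [simp]:
  "del_tau [] = []" "del_tau (Tau # \<alpha>) = del_tau \<alpha>" "del_tau (Act x # \<alpha>) = x # del_tau \<alpha>"
  by (simp_all add: del_tau_def)

lemma del_tau_map_Act [simp]: "del_tau (map Act \<beta>) = \<beta>"
  by (induction \<beta>) auto

definition max_comps :: "('s, 'a) pts \<Rightarrow> 's \<Rightarrow> ('a act list \<Rightarrow> bool) \<Rightarrow> ('a act \<times> 's pmf \<times> 's) list set" where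
  "max_comps T s Q =
     {c \<in> comps T s. Q (tr c) \<and> \<not> (\<exists>c' \<in> comps T s. Q (tr c') \<and> strict_prefix c c')}"

lemma Cmax_eq_max_comps: "Cmax T s = max_comps T s (\<lambda>_. True)"
  by (simp add: Cmax_def max_comps_def)

lemma Cw_eq_max_comps: "Cw T s \<beta> = max_comps T s (\<lambda>\<alpha>. del_tau \<alpha> = \<beta>)"
  by (simp add: Cw_def max_comps_def trace_equiv_def)

lemma max_comps_False [simp]: "max_comps T s (\<lambda>_. False) = {}"
  by (simp add: max_comps_def)

lemma max_comps_subset_comps: "max_comps T s Q \<subseteq> comps T s"
  by (auto simp: max_comps_def)

lemma max_comps_terminal:
  assumes "\<And>a \<pi>. (s, a, \<pi>) \<notin> T"
  shows "max_comps T s Q = (if Q [] then {[]} else {})"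
  using assms by (auto simp: max_comps_def comps_terminal)

lemma max_comps_deterministic:
  assumes "deterministic T" "(s, a, \<pi>) \<in> T"
  shows "max_comps T s Q =
    (if Q [] \<and> \<not> (\<exists>s' \<in> set_pmf \<pi>. \<exists>c \<in> comps T s'. Q (a # tr c)) then {[]} else {}) \<union>
    (\<Union>s' \<in> set_pmf \<pi>. (\<lambda>c. (a, \<pi>, s') # c) ` max_comps T s' (\<lambda>\<alpha>. Q (a # \<alpha>)))"
  unfolding max_comps_def comps_deterministic[OF assms]
  by auto

lemma PrS_UN_Cons:
  assumes "finite S" "\<And>s'. s' \<in> S \<Longrightarrow> finite (C s')"
  shows "PrS (\<Union>s' \<in> S. (\<lambda>c. (a, \<pi>, s') # c) ` C s') = (\<Sum>s' \<in> S. pmf \<pi> s' * PrS (C s'))"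
proof -
  have "PrS (\<Union>s' \<in> S. (\<lambda>c. (a, \<pi>, s') # c) ` C s') = (\<Sum>s' \<in> S. PrS ((\<lambda>c. (a, \<pi>, s') # c) ` C s'))"
    unfolding PrS_def using assms by (intro sum.UNION_disjoint) auto
  also have "\<dots> = (\<Sum>s' \<in> S. pmf \<pi> s' * PrS (C s'))"
    by (simp add: PrS_def sum.reindex inj_on_def sum_distrib_left)
  finally show ?thesis .
qed

definition prob_max_comps ::
  "('s, 'a) pts \<Rightarrow> 's \<Rightarrow> ('a act list \<Rightarrow> bool) \<Rightarrow> ('a act list \<Rightarrow> bool) \<Rightarrow> real" where
  "prob_max_comps T s Q R = PrS {c \<in> max_comps T s Q. R (tr c)}"

lemma prob_max_comps_terminal:
  assumes "\<And>a \<pi>. (s, a, \<pi>) \<notin> T"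
  shows "prob_max_comps T s Q R = (if Q [] \<and> R [] then 1 else 0)"
proof -
  have "{c \<in> max_comps T s Q. R (tr c)} = (if Q [] \<and> R [] then {[]} else {})"
    using assms by (auto simp: max_comps_terminal)
  then show ?thesis
    by (simp add: prob_max_comps_def PrS_def)
qed

lemma prob_max_comps_deterministic:
  assumes det: "deterministic T" and fin: "finite (comps T s)" and trans: "(s, a, \<pi>) \<in> T"
  shows "prob_max_comps T s Q R =
    (if Q [] \<and> R [] \<and> \<not> (\<exists>s' \<in> set_pmf \<pi>. \<exists>c \<in> comps T s'. Q (a # tr c)) then 1 else 0) +
    (\<Sum>s' \<in> set_pmf \<pi>. pmf \<pi> s' * prob_max_comps T s' (\<lambda>\<alpha>. Q (a # \<alpha>)) (\<lambda>\<alpha>. R (a # \<alpha>)))"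
proof -
  let ?C = "\<lambda>s'. {c \<in> max_comps T s' (\<lambda>\<alpha>. Q (a # \<alpha>)). R (a # tr c)}"
  let ?A = "if Q [] \<and> R [] \<and> \<not> (\<exists>s' \<in> set_pmf \<pi>. \<exists>c \<in> comps T s'. Q (a # tr c)) then {[]} else {}"
  let ?B = "\<Union>s' \<in> set_pmf \<pi>. (\<lambda>c. (a, \<pi>, s') # c) ` ?C s'"
  have split: "{c \<in> max_comps T s Q. R (tr c)} = ?A \<union> ?B"
    by (subst max_comps_deterministic[OF det trans]) (auto split: if_splits)
  have fin_C: "finite (?C s')" if "s' \<in> set_pmf \<pi>" for s'
    by (rule finite_subset[OF _ finite_comps_succ[OF fin trans that]])
      (auto dest: max_comps_subset_comps[THEN subsetD])
  have "prob_max_comps T s Q R = PrS ?A + PrS ?B"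
    unfolding prob_max_comps_def split PrS_def
    using finite_set_pmf_succ[OF fin trans] fin_C by (subst sum.union_disjoint) auto
  also have "PrS ?A = (if Q [] \<and> R [] \<and> \<not> (\<exists>s' \<in> set_pmf \<pi>. \<exists>c \<in> comps T s'. Q (a # tr c)) then 1 else 0)"
    by (simp add: PrS_def)
  also have "PrS ?B = (\<Sum>s' \<in> set_pmf \<pi>. pmf \<pi> s' * PrS (?C s'))"
    using finite_set_pmf_succ[OF fin trans] fin_C by (rule PrS_UN_Cons)
  finally show ?thesis
    by (simp add: prob_max_comps_def)
qed

lemma prob_max_comps_False [simp]:
  "prob_max_comps T s (\<lambda>_. False) R = 0" "prob_max_comps T s Q (\<lambda>_. False) = 0"
  by (simp_all add: prob_max_comps_def PrS_def)

lemma ex_comps_succ_Nil: "P [a] \<Longrightarrow> \<exists>s' \<in> set_pmf \<pi>. \<exists>c \<in> comps T s'. P (a # tr c)"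
  using set_pmf_not_empty[of \<pi>] by (metis comps_Nil ex_in_conv tr_simps(1))

lemma prob_max_comps_True:
  assumes det: "deterministic T" and fin: "finite (comps T s)"
  shows "prob_max_comps T s (\<lambda>_. True) (\<lambda>_. True) = 1"
  using fin
proof (induction s rule: finite_comps_induct)
  case (step s)
  show ?case
  proof (cases "\<exists>a \<pi>. (s, a, \<pi>) \<in> T")
    case False
    then show ?thesis
      by (simp add: prob_max_comps_terminal)
  next
    case True
    then obtain a \<pi> where trans: "(s, a, \<pi>) \<in> T" by blast
    have "prob_max_comps T s (\<lambda>_. True) (\<lambda>_. True) = (\<Sum>s' \<in> set_pmf \<pi>. pmf \<pi> s')"
      by (simp add: prob_max_comps_deterministic[OF det step(1) trans] step(2)[OF trans] set_pmf_not_empty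
          cong: sum.cong)
    also have "\<dots> = 1"
      using finite_set_pmf_succ[OF step(1) trans] by (simp add: sum_pmf_eq_1)
    finally show ?thesis .
  qed
qed

lemma prob_max_comps_weak_trace_eq:
  assumes det: "deterministic T" and fin: "finite (comps T s)"
  shows "prob_max_comps T s (\<lambda>\<alpha>. del_tau \<alpha> = \<beta>) (\<lambda>_. True) =
         prob_max_comps T s (\<lambda>_. True) (\<lambda>\<alpha>. prefix \<beta> (del_tau \<alpha>))"
  using fin
proof (induction s arbitrary: \<beta> rule: finite_comps_induct)
  case (step s)
  show ?case
  proof (cases "\<exists>a \<pi>. (s, a, \<pi>) \<in> T")
    case False
    then show ?thesis
      by (simp add: prob_max_comps_terminal)
  next
    case True
    then obtain a \<pi> where trans: "(s, a, \<pi>) \<in> T" by blast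
    note rec = prob_max_comps_deterministic[OF det step(1) trans]
    have total: "(\<Sum>s' \<in> set_pmf \<pi>. pmf \<pi> s' * prob_max_comps T s' (\<lambda>_. True) (\<lambda>_. True)) = 1"
      using finite_set_pmf_succ[OF step(1) trans]
      by (simp add: prob_max_comps_True[OF det finite_comps_succ[OF step(1) trans]] sum_pmf_eq_1 cong: sum.cong)
    show ?thesis
    proof (cases a)
      case Tau
      then show ?thesis
        using ex_comps_succ_Nil[of "\<lambda>\<alpha>. del_tau \<alpha> = []" Tau \<pi> T]
        by (auto simp: rec step(2)[OF trans] cong: sum.cong)
    next
      case (Act x)
      show ?thesis
      proof (cases \<beta>)
        case Nil
        then show ?thesis
          using total by (simp add: rec Act set_pmf_not_empty)
      next
        case (Cons y \<beta>')
        then show ?thesis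
          by (cases "x = y") (simp_all add: rec Act step(2)[OF trans] cong: sum.cong)
      qed
    qed
  qed
qed

definition weak_trace_distr :: "('s, 'a) pts \<Rightarrow> 's \<Rightarrow> 'a list \<Rightarrow> real" where
  "weak_trace_distr T s \<beta> = PrS {c \<in> Cmax T s. del_tau (tr c) = \<beta>}"

lemma finite_Cmax: "finite (comps T s) \<Longrightarrow> finite (Cmax T s)"
  by (rule finite_subset[rotated]) (auto simp: Cmax_def)

lemma PrS_Cw:
  assumes det: "deterministic T" and fin: "finite (comps T s)"
    and D: "finite D" "del_tau ` tr ` Cmax T s \<subseteq> D"
  shows "PrS (Cw T s \<beta>) = (\<Sum>\<delta> \<in> {\<delta> \<in> D. prefix \<beta> \<delta>}. weak_trace_distr T s \<delta>)"
proof -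
  have "PrS (Cw T s \<beta>) = PrS {c \<in> Cmax T s. prefix \<beta> (del_tau (tr c))}"
    using prob_max_comps_weak_trace_eq[OF det fin, of \<beta>]
    by (simp add: prob_max_comps_def Cw_eq_max_comps Cmax_eq_max_comps)
  also have "{c \<in> Cmax T s. prefix \<beta> (del_tau (tr c))} =
      (\<Union>\<delta> \<in> {\<delta> \<in> D. prefix \<beta> \<delta>}. {c \<in> Cmax T s. del_tau (tr c) = \<delta>})"
    using D(2) by auto
  also have "PrS \<dots> = (\<Sum>\<delta> \<in> {\<delta> \<in> D. prefix \<beta> \<delta>}. weak_trace_distr T s \<delta>)"
    unfolding PrS_def weak_trace_distr_def using D(1) finite_Cmax[OF fin]
    by (subst sum.UNION_disjoint) auto
  finally show ?thesis .
qed

lemma ftrace_tracing_formula [simp]: "ftrace (tracing_formula \<alpha>) = \<alpha>"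
  by (induction \<alpha>) auto

lemma mimicking_class_sum:
  assumes fin: "finite (Cmax T s)"
  shows "(\<Sum>\<Phi>' \<in> {\<Phi>'. mimicking T s \<Phi>' \<noteq> 0 \<and> formula_equiv \<Phi>' \<Phi>}. mimicking T s \<Phi>') =
         weak_trace_distr T s (del_tau (ftrace \<Phi>))"
proof -
  define \<beta> where "\<beta> = del_tau (ftrace \<Phi>)"
  define A where "A = {\<alpha> \<in> tr ` Cmax T s. del_tau \<alpha> = \<beta>}"
  have support_class: "{\<Phi>'. mimicking T s \<Phi>' \<noteq> 0 \<and> formula_equiv \<Phi>' \<Phi>} =
      {\<Phi>' \<in> tracing_formula ` A. mimicking T s \<Phi>' \<noteq> 0}"
    by (auto simp: mimicking_def A_def \<beta>_def formula_equiv_def trace_equiv_def split: if_splits)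
  have fin_A: "finite A"
    using fin by (simp add: A_def)
  have "inj tracing_formula"
    by (rule injI) (metis ftrace_tracing_formula)
  have "(\<Sum>\<Phi>' \<in> {\<Phi>'. mimicking T s \<Phi>' \<noteq> 0 \<and> formula_equiv \<Phi>' \<Phi>}. mimicking T s \<Phi>') =
      (\<Sum>\<Phi>' \<in> tracing_formula ` A. mimicking T s \<Phi>')"
    unfolding support_class using fin_A by (intro sum.mono_neutral_left) auto
  also have "\<dots> = (\<Sum>\<alpha> \<in> A. mimicking T s (tracing_formula \<alpha>))"
    using sum.reindex[OF inj_on_subset[OF \<open>inj tracing_formula\<close> subset_UNIV]] by simp
  also have "\<dots> = (\<Sum>\<alpha> \<in> A. PrS (Cmax_tr T s \<alpha>))"
    by (rule sum.cong) (auto simp: mimicking_def A_def)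
  also have "\<dots> = PrS (\<Union>\<alpha> \<in> A. Cmax_tr T s \<alpha>)"
    unfolding PrS_def using fin by (subst sum.UNION_disjoint) (auto simp: A_def Cmax_tr_def)
  also have "(\<Union>\<alpha> \<in> A. Cmax_tr T s \<alpha>) = {c \<in> Cmax T s. del_tau (tr c) = \<beta>}"
    by (auto simp: A_def Cmax_tr_def)
  finally show ?thesis
    by (simp add: weak_trace_distr_def \<beta>_def)
qed

lemma tdf_equiv_mimicking_iff:
  assumes "finite (Cmax T1 s1)" "finite (Cmax T2 s2)"
  shows "tdf_equiv (mimicking T1 s1) (mimicking T2 s2) \<longleftrightarrow>
         weak_trace_distr T1 s1 = weak_trace_distr T2 s2"
proof
  assume "tdf_equiv (mimicking T1 s1) (mimicking T2 s2)"
  then have "weak_trace_distr T1 s1 (del_tau (ftrace \<Phi>)) = weak_trace_distr T2 s2 (del_tau (ftrace \<Phi>))" for \<Phi>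
    using assms by (simp add: tdf_equiv_def mimicking_class_sum)
  then show "weak_trace_distr T1 s1 = weak_trace_distr T2 s2"
    by (metis ftrace_tracing_formula del_tau_map_Act ext)
next
  assume "weak_trace_distr T1 s1 = weak_trace_distr T2 s2"
  then show "tdf_equiv (mimicking T1 s1) (mimicking T2 s2)"
    using assms by (simp add: tdf_equiv_def mimicking_class_sum)
qed

lemma PrS_Cw_eq_iff:
  assumes "deterministic T1" "finite (comps T1 s1)" "deterministic T2" "finite (comps T2 s2)"
  shows "(\<forall>\<beta>. PrS (Cw T1 s1 \<beta>) = PrS (Cw T2 s2 \<beta>)) \<longleftrightarrow>
         weak_trace_distr T1 s1 = weak_trace_distr T2 s2"
proof -
  define D where "D = del_tau ` tr ` Cmax T1 s1 \<union> del_tau ` tr ` Cmax T2 s2"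
  have D: "finite D"
    using assms by (simp add: D_def finite_Cmax)
  have support: "weak_trace_distr T1 s1 \<delta> = 0 \<and> weak_trace_distr T2 s2 \<delta> = 0" if "\<delta> \<notin> D" for \<delta>
  proof -
    have empty: "{c \<in> Cmax T1 s1. del_tau (tr c) = \<delta>} = {}" "{c \<in> Cmax T2 s2. del_tau (tr c) = \<delta>} = {}"
      using that unfolding D_def by blast+
    show ?thesis
      unfolding weak_trace_distr_def empty by (simp add: PrS_def)
  qed
  have "PrS (Cw T1 s1 \<beta>) = (\<Sum>\<delta> \<in> {\<delta> \<in> D. prefix \<beta> \<delta>}. weak_trace_distr T1 s1 \<delta>)"
       "PrS (Cw T2 s2 \<beta>) = (\<Sum>\<delta> \<in> {\<delta> \<in> D. prefix \<beta> \<delta>}. weak_trace_distr T2 s2 \<delta>)" for \<beta>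
    by (rule PrS_Cw[OF assms(1,2) D] PrS_Cw[OF assms(3,4) D], simp add: D_def)+
  moreover have "weak_trace_distr T1 s1 = weak_trace_distr T2 s2"
    if "\<And>\<beta>. (\<Sum>\<delta> \<in> {\<delta> \<in> D. prefix \<beta> \<delta>}. weak_trace_distr T1 s1 \<delta>) =
               (\<Sum>\<delta> \<in> {\<delta> \<in> D. prefix \<beta> \<delta>}. weak_trace_distr T2 s2 \<delta>)"
    using eq_if_prefix_sums_eq[OF D support that] by (rule ext)
  ultimately show ?thesis
    by auto
qed

lemma finite_comps_resolution:
  assumes "is_resolution T s ZS TZ corr z0" "finite (comps T s)"
  shows "finite (comps TZ z0)"
proof -
  note res = resolution_deterministic_matches[OF assms(1)]
  show ?thesis
    by (rule finite_comps_if_matches[OF res(1,2)]) (simp add: res(3) assms(2))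
qed

theorem theorem12:
  fixes T :: "('s, 'a) pts" and s t :: 's
    and ZS1 :: "'z1 set" and TZ1 :: "('z1, 'a) pts" and corr1 :: "'z1 \<Rightarrow> 's" and zs :: 'z1
    and ZS2 :: "'z2 set" and TZ2 :: "('z2, 'a) pts" and corr2 :: "'z2 \<Rightarrow> 's" and zt :: 'z2
  assumes "fin_supported T" and "image_finite T"
    and "finite_process T s" and "finite_process T t"
    and "is_resolution T s ZS1 TZ1 corr1 zs"
    and "is_resolution T t ZS2 TZ2 corr2 zt"
  shows "tdf_equiv (mimicking TZ1 zs) (mimicking TZ2 zt) \<longleftrightarrow>
         (\<forall>\<alpha> :: 'a list. PrS (Cw TZ1 zs \<alpha>) = PrS (Cw TZ2 zt \<alpha>))"
proof -
  have fin: "finite (comps TZ1 zs)" "finite (comps TZ2 zt)"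
    using finite_comps_resolution[OF assms(5)] finite_comps_resolution[OF assms(6)] assms(3,4)
    unfolding finite_process_def by blast+
  have det: "deterministic TZ1" "deterministic TZ2"
    by (rule resolution_deterministic_matches(1)[OF assms(5)] resolution_deterministic_matches(1)[OF assms(6)])+
  have "tdf_equiv (mimicking TZ1 zs) (mimicking TZ2 zt) \<longleftrightarrow>
      weak_trace_distr TZ1 zs = weak_trace_distr TZ2 zt"
    using fin by (intro tdf_equiv_mimicking_iff finite_Cmax)
  also have "\<dots> \<longleftrightarrow> (\<forall>\<alpha>. PrS (Cw TZ1 zs \<alpha>) = PrS (Cw TZ2 zt \<alpha>))"
    by (rule PrS_Cw_eq_iff[OF det(1) fin(1) det(2) fin(2), symmetric])
  finally show ?thesis .
qed

end
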